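(* Let $G$ be a random graph on the node set $\mathbb{N}$ whose distribution $P$ is exchangeable, and let $\phi:\mathcal{U}\to\mathbb{R}$ be the function determined by its Möbius parameter via $\phi([F]) = Z(F) = P(F\subseteq G)$ for every finite labeled graph $F$ with node set contained in $\mathbb{N}$. Then $\phi$ is bounded and positive definite on the semigroup $(\mathcal{U},+)$ and $\phi(\emptyset)=1$; that is, $\phi\in\mathcal{P}^b_1(\mathcal{U})$.
   Context: All graphs are simple. For $n\in\mathbb{N}$, $\mathcal{L}_n$ is the set of labeled simple graphs with node set $[n]=\{1,\dots,n\}$, and $\mathcal{L}_\infty$ is the set of simple graphs with node set $\mathbb{N}$; a random graph is a random element of $\mathcal{L}_\infty$ (with the $\sigma$-algebra generated by the edge indicators). For $G\in\mathcal{L}_\infty$ and $n\in\mathbb{N}$, $G[n]\in\mathcal{L}_n$ is the subgraph induced by $[n]$. For $H\in\mathcal{L}_n$ and a permutation $\sigma$ of $[n]$, $H_\sigma$ is the relabeled graph with $i\sim j$ in $H$ iff $\sigma(i)\sim\sigma(j)$ in $H_\sigma$. The distribution $P$ is exchangeable if $P(G[n]=H)=P(G[n]=H_\sigma)$ for all $n$, all $H\in\mathcal{L}_n$ and all permutations $\sigma$ of $[n]$. For a finite labeled graph $F$ with node set in $\mathbb{N}$, $F\subseteq G$ means every edge of $F$ is an edge of $G$; the function $Z(F)=P(F\subseteq G)$ is the Möbius parameter of $P$. $\mathcal{U}$ denotes the set of unlabeled finite simple graphs (isomorphism classes $[F]$ of finite labeled graphs $F$), including the empty graph $\emptyset$;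 under exchangeability $Z(F)$ depends only on $[F]$, which defines $\phi$. $(\mathcal{U},+)$ is the Abelian semigroup where $U+V$ is the node-disjoint union, with neutral element $\emptyset$. A function $\phi:\mathcal{U}\to\mathbb{R}$ is positive definite if $\sum_{j,k=1}^n c_jc_k\phi(s_j+s_k)\ge 0$ for all $n\in\mathbb{N}$, $c_j\in\mathbb{R}$, $s_j\in\mathcal{U}$. $\mathcal{P}^b_1(\mathcal{U})$ is the set of bounded positive definite functions $\phi$ on $\mathcal{U}$ with $\phi(\emptyset)=1$. *)

theory Defs
  imports "HOL-Probability.Probability"
begin

text \<open>A (simple) graph is represented by its set of edges, each edge being a
  two-element set of nodes.\<close>

definition nodes_pos :: "nat set" where
  "nodes_pos = {1..}"

definition edge_set_on :: "nat set \<Rightarrow> nat set set" where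
  "edge_set_on V = {e. \<exists>a b. a \<noteq> b \<and> a \<in> V \<and> b \<in> V \<and> e = {a, b}}"

definition L_inf :: "nat set set set" where
  "L_inf = Pow (edge_set_on nodes_pos)"

definition L_n :: "nat \<Rightarrow> nat set set set" where
  "L_n n = Pow (edge_set_on {1..n})"

definition graph_sigma :: "nat set set measure" where
  "graph_sigma = sigma L_inf {{G \<in> L_inf. e \<in> G} | e. e \<in> edge_set_on nodes_pos}"

definition induced :: "nat set set \<Rightarrow> nat \<Rightarrow> nat set set" where
  "induced G n = {e \<in> G. e \<subseteq> {1..n}}"

definition relabel :: "(nat \<Rightarrow> nat) \<Rightarrow> nat set set \<Rightarrow> nat set set" where
  "relabel \<sigma> H = (\<lambda>e. \<sigma> ` e) ` H"

text \<open>Exchangeability of a distribution P on \<open>L_\<infinity>\<close> (the random graph G is the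
  identity on the sample space).\<close>
definition exchangeable :: "nat set set measure \<Rightarrow> bool" where
  "exchangeable P \<longleftrightarrow>
     (\<forall>n H \<sigma>. H \<in> L_n n \<longrightarrow> \<sigma> permutes {1..n} \<longrightarrow>
        measure P {G \<in> space P. induced G n = H}
      = measure P {G \<in> space P. induced G n = relabel \<sigma> H})"

definition moebius_Z :: "nat set set measure \<Rightarrow> nat set set \<Rightarrow> real" where
  "moebius_Z P F = measure P {G \<in> space P. F \<subseteq> G}"

text \<open>A finite labeled graph: a finite node set V \<subseteq> \<nat> (as labels) together with
  an edge set on V.\<close>
definition fg_valid :: "nat set \<times> nat set set \<Rightarrow> bool" where
  "fg_valid F \<longleftrightarrow> finite (fst F) \<and> snd F \<subseteq> edge_set_on (fst F)"

definition fg_iso :: "nat set \<times> nat set set \<Rightarrow> nat set \<times> nat set set \<Rightarrow> bool" where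
  "fg_iso F1 F2 \<longleftrightarrow> fg_valid F1 \<and> fg_valid F2 \<and>
     (\<exists>f. bij_betw f (fst F1) (fst F2) \<and> snd F2 = (\<lambda>e. f ` e) ` snd F1)"

lemma edge_sub: "F \<subseteq> edge_set_on V \<Longrightarrow> e \<in> F \<Longrightarrow> e \<subseteq> V"
  unfolding edge_set_on_def by auto

lemma fg_iso_sym: "fg_iso F1 F2 \<Longrightarrow> fg_iso F2 F1"
proof -
  assume "fg_iso F1 F2"
  then obtain f where v: "fg_valid F1" "fg_valid F2" and b: "bij_betw f (fst F1) (fst F2)"
    and E: "snd F2 = (\<lambda>e. f ` e) ` snd F1" unfolding fg_iso_def by blast
  let ?g = "inv_into (fst F1) f"
  have bg: "bij_betw ?g (fst F2) (fst F1)" using b by (rule bij_betw_inv_into)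
  have "\<And>e. e \<in> snd F1 \<Longrightarrow> ?g ` f ` e = e"
  proof -
    fix e assume "e \<in> snd F1"
    then have "e \<subseteq> fst F1" using v(1) edge_sub unfolding fg_valid_def by blast
    then show "?g ` f ` e = e" using b
      by (metis bij_betw_def inv_into_image_cancel)
  qed
  note * = this
  have "(\<lambda>e. ?g ` e) ` snd F2 = snd F1"
  proof
    show "(\<lambda>e. ?g ` e) ` snd F2 \<subseteq> snd F1"
    proof
      fix x assume "x \<in> (\<lambda>e. ?g ` e) ` snd F2"
      then obtain e where e: "e \<in> snd F1" "x = ?g ` f ` e" unfolding E by blast
      then show "x \<in> snd F1" using *[OF e(1)] by simp
    qed
    show "snd F1 \<subseteq> (\<lambda>e. ?g ` e) ` snd F2"
    proof
      fix e assume e: "e \<in> snd F1"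
      then have "f ` e \<in> snd F2" unfolding E by blast
      then have "?g ` f ` e \<in> (\<lambda>e. ?g ` e) ` snd F2" by (rule imageI)
      then show "e \<in> (\<lambda>e. ?g ` e) ` snd F2" using *[OF e] by simp
    qed
  qed
  then have "snd F1 = (\<lambda>e. ?g ` e) ` snd F2" by simp
  then show "fg_iso F2 F1" using v bg unfolding fg_iso_def by blast
qed

lemma fg_iso_trans: "fg_iso F1 F2 \<Longrightarrow> fg_iso F2 F3 \<Longrightarrow> fg_iso F1 F3"
proof -
  assume h1: "fg_iso F1 F2" and h2: "fg_iso F2 F3"
  from h1 have v1: "fg_valid F1" unfolding fg_iso_def by (elim conjE)
  from h2 have v3: "fg_valid F3" unfolding fg_iso_def by (elim conjE)
  from h1 obtain f where b: "bij_betw f (fst F1) (fst F2)"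
    and E: "snd F2 = (\<lambda>e. f ` e) ` snd F1" unfolding fg_iso_def by (elim conjE exE)
  from h2 obtain g where b2: "bij_betw g (fst F2) (fst F3)"
    and E2: "snd F3 = (\<lambda>e. g ` e) ` snd F2" unfolding fg_iso_def by (elim conjE exE)
  have bb: "bij_betw (g \<circ> f) (fst F1) (fst F3)" using b b2 by (rule bij_betw_trans)
  have EE: "snd F3 = (\<lambda>e. (g \<circ> f) ` e) ` snd F1"
    unfolding E2 E image_comp comp_def ..
  show ?thesis unfolding fg_iso_def using v1 v3 bb EE by blast
qed

lemma fg_iso_part_equivp: "part_equivp fg_iso"
proof (rule part_equivpI)
  have "fg_valid ({}, {})" unfolding fg_valid_def by simp
  then have "fg_iso ({}, {}) ({}, {})" unfolding fg_iso_def by auto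
  then show "\<exists>x. fg_iso x x" by blast
  show "symp fg_iso" unfolding symp_def using fg_iso_sym by blast
  show "transp fg_iso" unfolding transp_def using fg_iso_trans by blast
qed

text \<open>\<open>\<U>\<close>: unlabeled finite simple graphs = isomorphism classes of finite
  labeled graphs.\<close>
quotient_type ugraph = "nat set \<times> nat set set" / partial: fg_iso
  by (rule fg_iso_part_equivp)

definition fg_disj_union :: "nat set \<times> nat set set \<Rightarrow> nat set \<times> nat set set \<Rightarrow> nat set \<times> nat set set" where
  "fg_disj_union F1 F2 =
     ((\<lambda>x. 2 * x) ` fst F1 \<union> (\<lambda>x. 2 * x + 1) ` fst F2,
      (\<lambda>e. (\<lambda>x. 2 * x) ` e) ` snd F1 \<union> (\<lambda>e. (\<lambda>x. 2 * x + 1) ` e) ` snd F2)"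

definition ug_plus :: "ugraph \<Rightarrow> ugraph \<Rightarrow> ugraph" where
  "ug_plus U V = abs_ugraph (fg_disj_union (rep_ugraph U) (rep_ugraph V))"

definition ug_empty :: ugraph where
  "ug_empty = abs_ugraph ({}, {})"

definition positive_definite :: "(ugraph \<Rightarrow> real) \<Rightarrow> bool" where
  "positive_definite \<phi> \<longleftrightarrow>
     (\<forall>(n::nat) (c::nat \<Rightarrow> real) (s::nat \<Rightarrow> ugraph).
        0 \<le> (\<Sum>j\<in>{1..n}. \<Sum>k\<in>{1..n}. c j * c k * \<phi> (ug_plus (s j) (s k))))"

definition Pb1 :: "(ugraph \<Rightarrow> real) set" where
  "Pb1 = {\<phi>. (\<exists>B. \<forall>u. \<bar>\<phi> u\<bar> \<le> B) \<and> positive_definite \<phi> \<and> \<phi> ug_empty = 1}"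

end

theory Submission
  imports Defs
begin

(* Exchangeability makes Z(F) depend only on the isomorphism class of F: Z(F) is the sum of
   P(G[n] = H) over the H in L_n containing F, and a bijection between the node sets of two
   isomorphic graphs extends to a permutation of some [n].

   For positive definiteness, put N node-disjoint copies of s_1, ..., s_n into N disjoint blocks
   of labels and let A(m,j) be the event that the m-th copy of s_j lies in G.  For m <> m' the
   events A(m,j) and A(m',k) occur together with probability phi(s_j + s_k), so the nonnegative
   number E[(sum over m < N and j of c_j 1_A(m,j))^2] is at most N C + N (N - 1) S, where
   S = sum_{j,k} c_j c_k phi(s_j + s_k) and C = sum_{j,k} |c_j| |c_k|.  As N is arbitrary, S >= 0. *)

lemma edge_set_on_subset_Pow: "edge_set_on V \<subseteq> Pow V"
  unfolding edge_set_on_def by auto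

lemma finite_edge_set_on: "finite V \<Longrightarrow> finite (edge_set_on V)"
  using edge_set_on_subset_Pow by (meson finite_Pow_iff finite_subset)

lemma edge_set_on_mono: "V \<subseteq> W \<Longrightarrow> edge_set_on V \<subseteq> edge_set_on W"
  unfolding edge_set_on_def by blast

lemma edge_set_on_atLeastAtMost_subset_nodes_pos: "edge_set_on {1..n} \<subseteq> edge_set_on nodes_pos"
  unfolding nodes_pos_def by (rule edge_set_on_mono) auto

lemma induced_eq_Int_edge_set_on: "G \<in> L_inf \<Longrightarrow> induced G n = G \<inter> edge_set_on {1..n}"
  unfolding induced_def L_inf_def edge_set_on_def nodes_pos_def by blast

lemma relabel_mono: "F \<subseteq> H \<Longrightarrow> relabel \<sigma> F \<subseteq> relabel \<sigma> H"
  unfolding relabel_def by (rule image_mono)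

lemma relabel_inv_relabel:
  assumes "\<sigma> permutes S"
  shows "relabel (inv \<sigma>) (relabel \<sigma> H) = H" and "relabel \<sigma> (relabel (inv \<sigma>) H) = H"
  using permutes_inv_o[OF assms] unfolding relabel_def by (simp_all add: image_comp)

lemma relabel_edge_set_on:
  assumes "\<sigma> permutes V" "H \<subseteq> edge_set_on V"
  shows "relabel \<sigma> H \<subseteq> edge_set_on V"
proof
  fix e assume "e \<in> relabel \<sigma> H"
  then obtain a b where ab: "a \<noteq> b" "a \<in> V" "b \<in> V" "e = \<sigma> ` {a, b}"
    using assms(2) unfolding relabel_def edge_set_on_def by blast
  have "\<sigma> a \<noteq> \<sigma> b" using ab(1) permutes_inj[OF assms(1)] by (meson injD)
  moreover have "\<sigma> a \<in> V" "\<sigma> b \<in> V"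
    using ab(2,3) permutes_in_image[OF assms(1)] by auto
  ultimately show "e \<in> edge_set_on V" unfolding edge_set_on_def ab(4) by auto
qed

lemma relabel_L_n: "\<sigma> permutes {1..n} \<Longrightarrow> H \<in> L_n n \<Longrightarrow> relabel \<sigma> H \<in> L_n n"
  unfolding L_n_def using relabel_edge_set_on by blast

lemma bij_betw_extends_to_permutes:
  assumes "finite S" "A \<subseteq> S" "B \<subseteq> S" "bij_betw f A B"
  obtains \<sigma> where "\<sigma> permutes S" "\<And>x. x \<in> A \<Longrightarrow> \<sigma> x = f x"
proof -
  have "finite A" "finite B" using assms(1-3) finite_subset by auto
  moreover have "card A = card B" using assms(4) by (rule bij_betw_same_card)
  ultimately have "card (S - A) = card (S - B)"
    using assms(2,3) by (simp add: card_Diff_subset)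
  then obtain g where g: "bij_betw g (S - A) (S - B)"
    using finite_same_card_bij[of "S - A" "S - B"] assms(1) by auto
  define \<sigma> where "\<sigma> x = (if x \<in> A then f x else if x \<in> S then g x else x)" for x
  have "bij_betw \<sigma> A B" using assms(4) by (simp add: \<sigma>_def cong: bij_betw_cong)
  moreover have "bij_betw \<sigma> (S - A) (S - B)"
    using g bij_betw_cong[of "S - A" \<sigma> g "S - B"] by (simp add: \<sigma>_def)
  ultimately have "bij_betw \<sigma> (A \<union> (S - A)) (B \<union> (S - B))" by (rule bij_betw_combine) blast
  then have "bij_betw \<sigma> S S" using assms(2,3) by (simp add: Un_absorb1)
  then have "\<sigma> permutes S" by (rule bij_imp_permutes) (use assms(2) in \<open>auto simp: \<sigma>_def\<close>)
  then show ?thesis using that by (simp add: \<sigma>_def)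
qed

definition fg_image :: "(nat \<Rightarrow> nat) \<Rightarrow> nat set \<times> nat set set \<Rightarrow> nat set \<times> nat set set" where
  "fg_image h F = (h ` fst F, (\<lambda>e. h ` e) ` snd F)"

lemma fg_valid_fg_image:
  assumes "fg_valid X" "inj_on h (fst X)"
  shows "fg_valid (fg_image h X)"
  unfolding fg_valid_def fg_image_def fst_conv snd_conv
proof
  show "finite (h ` fst X)" using assms(1) unfolding fg_valid_def by simp
  show "(\<lambda>e. h ` e) ` snd X \<subseteq> edge_set_on (h ` fst X)"
  proof
    fix e' assume "e' \<in> (\<lambda>e. h ` e) ` snd X"
    then obtain a b where ab: "a \<noteq> b" "a \<in> fst X" "b \<in> fst X" "e' = h ` {a, b}"
      using assms(1) unfolding fg_valid_def edge_set_on_def by blast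
    have "h a \<noteq> h b" using ab assms(2) by (meson inj_on_eq_iff)
    then show "e' \<in> edge_set_on (h ` fst X)" unfolding edge_set_on_def ab(4) using ab by auto
  qed
qed

lemma fg_iso_fg_image:
  assumes "fg_valid X" "inj_on h (fst X)"
  shows "fg_iso X (fg_image h X)"
  using assms fg_valid_fg_image[OF assms] inj_on_imp_bij_betw[OF assms(2)]
  unfolding fg_iso_def by (auto simp: fg_image_def)

lemma fg_iso_refl: "fg_valid X \<Longrightarrow> fg_iso X X"
  using fg_iso_fg_image[of X id] by (simp add: fg_image_def)

lemma fg_valid_rep_ugraph: "fg_valid (rep_ugraph U)"
  using Quotient3_rep_reflp[OF Quotient3_ugraph, of U] unfolding fg_iso_def by simp

lemma fg_iso_rep_abs_ugraph: "fg_valid X \<Longrightarrow> fg_iso (rep_ugraph (abs_ugraph X)) X"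
  by (rule Quotient3_rep_abs[OF Quotient3_ugraph fg_iso_refl])

definition fg_union :: "nat set \<times> nat set set \<Rightarrow> nat set \<times> nat set set \<Rightarrow> nat set \<times> nat set set" where
  "fg_union A B = (fst A \<union> fst B, snd A \<union> snd B)"

lemma fg_disj_union_eq_fg_union:
  "fg_disj_union X Y = fg_union (fg_image (\<lambda>x. 2 * x) X) (fg_image (\<lambda>x. 2 * x + 1) Y)"
  by (simp add: fg_disj_union_def fg_union_def fg_image_def)

lemma fg_image_fg_union: "fg_image h (fg_union A B) = fg_union (fg_image h A) (fg_image h B)"
  by (simp add: fg_image_def fg_union_def image_Un)

lemma fg_image_fg_image: "fg_image h (fg_image k X) = fg_image (h \<circ> k) X"
  by (simp add: fg_image_def image_comp)

lemma fg_valid_fg_union: "fg_valid A \<Longrightarrow> fg_valid B \<Longrightarrow> fg_valid (fg_union A B)"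
  unfolding fg_valid_def fg_union_def
  using edge_set_on_mono[of "fst A" "fst A \<union> fst B"] edge_set_on_mono[of "fst B" "fst A \<union> fst B"]
  by auto

lemma fg_valid_disj_union: "fg_valid X \<Longrightarrow> fg_valid Y \<Longrightarrow> fg_valid (fg_disj_union X Y)"
  unfolding fg_disj_union_eq_fg_union
  by (intro fg_valid_fg_union fg_valid_fg_image) (auto simp: inj_on_def)

lemma fg_iso_disj_union_embedding:
  assumes X: "fg_valid X" "inj_on f (fst X)" and Y: "fg_valid Y" "inj_on g (fst Y)"
    and disj: "f ` fst X \<inter> g ` fst Y = {}"
  shows "fg_iso (fg_disj_union X Y) (fg_union (fg_image f X) (fg_image g Y))"
proof -
  define h where "h y = (if even y then f (y div 2) else g (y div 2))" for y
  have h_even: "h \<circ> (\<lambda>x. 2 * x) = f" and h_odd: "h \<circ> (\<lambda>x. 2 * x + 1) = g"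
    by (auto simp: h_def)
  have "inj_on h (fst (fg_image (\<lambda>x. 2 * x) X))" "inj_on h (fst (fg_image (\<lambda>x. 2 * x + 1) Y))"
    unfolding fg_image_def fst_conv by (rule inj_on_imageI, unfold h_even h_odd, fact)+
  moreover have "h ` fst (fg_image (\<lambda>x. 2 * x) X) \<inter> h ` fst (fg_image (\<lambda>x. 2 * x + 1) Y) = {}"
    using disj unfolding fg_image_def fst_conv image_comp h_even h_odd .
  ultimately have "inj_on h (fst (fg_disj_union X Y))"
    unfolding fg_disj_union_eq_fg_union fg_union_def fst_conv inj_on_Un by blast
  then have "fg_iso (fg_disj_union X Y) (fg_image h (fg_disj_union X Y))"
    by (rule fg_iso_fg_image[OF fg_valid_disj_union[OF X(1) Y(1)]])
  then show ?thesis
    unfolding fg_disj_union_eq_fg_union fg_image_fg_union fg_image_fg_image h_even h_odd .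
qed

definition block_shift :: "nat \<Rightarrow> nat \<Rightarrow> nat \<Rightarrow> nat" where
  "block_shift b m x = m * b + x + 1"

lemma inj_on_block_shift: "inj_on (block_shift b m) X"
  unfolding block_shift_def inj_on_def by simp

lemma block_shift_in_nodes_pos: "block_shift b m x \<in> nodes_pos"
  unfolding block_shift_def nodes_pos_def by simp

lemma block_shift_disjoint:
  assumes "A \<subseteq> {..<b}" "B \<subseteq> {..<b}" "m \<noteq> m'"
  shows "block_shift b m ` A \<inter> block_shift b m' ` B = {}"
proof -
  have "m * b + x + 1 \<noteq> m' * b + y + 1" if "x < b" "y < b" for x y
  proof
    assume "m * b + x + 1 = m' * b + y + 1"
    then have "(m * b + x) div b = (m' * b + y) div b" by simp
    then show False using that assms(3) by simp
  qed
  then show ?thesis using assms unfolding block_shift_def by blast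
qed

lemma (in finite_measure) gram_sum_measure_Int_nonneg:
  assumes "finite I" "\<And>i. i \<in> I \<Longrightarrow> B i \<in> sets M"
  shows "0 \<le> (\<Sum>i\<in>I. \<Sum>i'\<in>I. a i * a i' * measure M (B i \<inter> B i'))"
proof -
  define X where "X x = (\<Sum>i\<in>I. a i * indicator (B i) x)" for x
  have "integrable M (\<lambda>x. a i * a i' * indicator (B i \<inter> B i') x)" if "i \<in> I" "i' \<in> I" for i i'
    using that assms(2) by (auto intro!: integrable_real_mult_indicator simp: less_top[symmetric])
  then have "(\<Sum>i\<in>I. \<Sum>i'\<in>I. a i * a i' * measure M (B i \<inter> B i'))
      = integral\<^sup>L M (\<lambda>x. \<Sum>i\<in>I. \<Sum>i'\<in>I. a i * a i' * indicator (B i \<inter> B i') x)"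
    using assms(2)
    by (simp add: Bochner_Integration.integral_sum integrable_sum cong: sum.cong)
  also have "\<dots> = integral\<^sup>L M (\<lambda>x. (X x)\<^sup>2)"
    unfolding X_def power2_eq_square sum_product indicator_inter_arith by (simp add: mult_ac)
  also have "\<dots> \<ge> 0" by simp
  finally show ?thesis .
qed

lemma nonneg_if_offdiagonal_const:
  fixes T :: "nat \<Rightarrow> nat \<Rightarrow> real"
  assumes sections: "\<And>N. 0 \<le> (\<Sum>m<N. \<Sum>m'<N. T m m')"
    and diag: "\<And>m. T m m \<le> C"
    and offdiag: "\<And>m m'. m \<noteq> m' \<Longrightarrow> T m m' = S"
  shows "0 \<le> S"
proof (rule ccontr)
  assume "\<not> 0 \<le> S"
  then have "0 < - S" by simp
  then obtain N :: nat where N: "C < real N * - S" using ex_less_of_nat_mult by blast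
  have row: "(\<Sum>m'<Suc N. T m m') \<le> C + real N * S" if "m < Suc N" for m
  proof -
    have "(\<Sum>m'<Suc N. T m m') = T m m + (\<Sum>m'\<in>{..<Suc N} - {m}. T m m')"
      using that by (subst sum.remove[of _ m]) auto
    also have "(\<Sum>m'\<in>{..<Suc N} - {m}. T m m') = (\<Sum>m'\<in>{..<Suc N} - {m}. S)"
      using offdiag by (intro sum.cong) auto
    also have "\<dots> = real N * S"
      using that by simp
    finally show ?thesis using diag[of m] by simp
  qed
  have "0 \<le> (\<Sum>m<Suc N. \<Sum>m'<Suc N. T m m')" by (rule sections)
  also have "\<dots> \<le> (\<Sum>m<Suc N. C + real N * S)" using row by (intro sum_mono) simp
  also have "\<dots> = real (Suc N) * (C + real N * S)" by simp
  also have "\<dots> < 0" using N by (intro mult_pos_neg) auto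
  finally show False by simp
qed

locale random_graph = prob_space M for M :: "nat set set measure" +
  assumes sets_eq_graph_sigma: "sets M = sets graph_sigma"
begin

lemma space_eq_L_inf: "space M = L_inf"
proof -
  have "space M = space graph_sigma" using sets_eq_graph_sigma by (rule sets_eq_imp_space_eq)
  also have "\<dots> = L_inf" unfolding graph_sigma_def
    by (rule space_measure_of) (auto simp: L_inf_def)
  finally show ?thesis .
qed

lemma pred_edge_mem: "e \<in> edge_set_on nodes_pos \<Longrightarrow> Measurable.pred M (\<lambda>G. e \<in> G)"
  unfolding pred_def sets_eq_graph_sigma space_eq_L_inf graph_sigma_def
  by (subst sets_measure_of) (auto simp: L_inf_def intro!: sigma_sets.Basic)

lemma finite_edges_event_sets:
  assumes "finite E" "E \<subseteq> edge_set_on nodes_pos"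
  shows "{G \<in> space M. Q (G \<inter> E)} \<in> sets M"
proof -
  have "Q (G \<inter> E) \<longleftrightarrow> (\<exists>K\<in>Pow E. Q K \<and> (\<forall>e\<in>E. e \<in> G \<longleftrightarrow> e \<in> K))" for G
  proof
    show "\<exists>K\<in>Pow E. Q K \<and> (\<forall>e\<in>E. e \<in> G \<longleftrightarrow> e \<in> K)" if "Q (G \<inter> E)"
      using that by (intro bexI[of _ "G \<inter> E"]) auto
    show "Q (G \<inter> E)" if "\<exists>K\<in>Pow E. Q K \<and> (\<forall>e\<in>E. e \<in> G \<longleftrightarrow> e \<in> K)"
    proof -
      from that obtain K where "K \<subseteq> E" "Q K" "\<forall>e\<in>E. e \<in> G \<longleftrightarrow> e \<in> K" by auto
      moreover from this have "G \<inter> E = K" by auto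
      ultimately show ?thesis by simp
    qed
  qed
  moreover have "Measurable.pred M (\<lambda>G. \<exists>K\<in>Pow E. Q K \<and> (\<forall>e\<in>E. e \<in> G \<longleftrightarrow> e \<in> K))"
    using assms by (intro pred_intros_finite pred_intros_logic pred_edge_mem) auto
  ultimately show ?thesis unfolding pred_def by simp
qed

lemma containment_event_sets:
  assumes "fg_valid F" "fst F \<subseteq> nodes_pos"
  shows "{G \<in> space M. snd F \<subseteq> G} \<in> sets M"
proof -
  have "finite (snd F)"
    using assms(1) finite_edge_set_on finite_subset unfolding fg_valid_def by blast
  moreover have "snd F \<subseteq> edge_set_on nodes_pos"
    using assms edge_set_on_mono unfolding fg_valid_def by blast
  ultimately have "{G \<in> space M. snd F \<subseteq> G \<inter> snd F} \<in> sets M"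
    by (rule finite_edges_event_sets)
  moreover have "{G \<in> space M. snd F \<subseteq> G \<inter> snd F} = {G \<in> space M. snd F \<subseteq> G}" by blast
  ultimately show ?thesis by simp
qed

lemma moebius_Z_eq_sum_induced:
  assumes "F \<subseteq> edge_set_on {1..n}"
  shows "moebius_Z M F = (\<Sum>H\<in>{H \<in> L_n n. F \<subseteq> H}. measure M {G \<in> space M. induced G n = H})"
proof -
  let ?E = "edge_set_on {1..n}"
  have finite_E: "finite ?E" by (rule finite_edge_set_on) simp
  have induced: "induced G n = G \<inter> ?E" if "G \<in> space M" for G
    using that induced_eq_Int_edge_set_on space_eq_L_inf by simp
  have "{G \<in> space M. F \<subseteq> G} = (\<Union>H\<in>{H \<in> L_n n. F \<subseteq> H}. {G \<in> space M. induced G n = H})"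
    using assms induced unfolding L_n_def by auto
  moreover have "measure M (\<Union>H\<in>{H \<in> L_n n. F \<subseteq> H}. {G \<in> space M. induced G n = H})
     = (\<Sum>H\<in>{H \<in> L_n n. F \<subseteq> H}. measure M {G \<in> space M. induced G n = H})"
  proof (rule finite_measure_finite_Union)
    show "finite {H \<in> L_n n. F \<subseteq> H}" using finite_E unfolding L_n_def by simp
    have "{G \<in> space M. induced G n = H} = {G \<in> space M. G \<inter> ?E = H}" for H
      using induced by auto
    then have "{G \<in> space M. induced G n = H} \<in> sets M" for H
      using finite_edges_event_sets[OF finite_E edge_set_on_atLeastAtMost_subset_nodes_pos] by simp
    then show "(\<lambda>H. {G \<in> space M. induced G n = H}) ` {H \<in> L_n n. F \<subseteq> H} \<subseteq> sets M" by blast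
    show "disjoint_family_on (\<lambda>H. {G \<in> space M. induced G n = H}) {H \<in> L_n n. F \<subseteq> H}"
      unfolding disjoint_family_on_def by auto
  qed
  ultimately show ?thesis unfolding moebius_Z_def by simp
qed

end

locale exchangeable_random_graph = random_graph +
  assumes exchangeable: "exchangeable M"
begin

lemma moebius_Z_relabel:
  assumes \<sigma>: "\<sigma> permutes {1..n}" and F: "F \<subseteq> edge_set_on {1..n}"
  shows "moebius_Z M (relabel \<sigma> F) = moebius_Z M F"
proof -
  let ?p = "\<lambda>H. measure M {G \<in> space M. induced G n = H}"
  have "moebius_Z M F = (\<Sum>H\<in>{H \<in> L_n n. F \<subseteq> H}. ?p H)"
    by (rule moebius_Z_eq_sum_induced[OF F])
  also have "\<dots> = (\<Sum>H\<in>{H \<in> L_n n. relabel \<sigma> F \<subseteq> H}. ?p H)"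
  proof (rule sum.reindex_bij_witness[where j = "relabel \<sigma>" and i = "relabel (inv \<sigma>)"])
    fix H assume H: "H \<in> {H \<in> L_n n. F \<subseteq> H}"
    show "relabel (inv \<sigma>) (relabel \<sigma> H) = H" by (rule relabel_inv_relabel[OF \<sigma>])
    show "relabel \<sigma> H \<in> {H \<in> L_n n. relabel \<sigma> F \<subseteq> H}"
      using H relabel_L_n[OF \<sigma>] relabel_mono by blast
    show "?p (relabel \<sigma> H) = ?p H"
      using H \<sigma> exchangeable unfolding exchangeable_def by simp
  next
    fix H assume H: "H \<in> {H \<in> L_n n. relabel \<sigma> F \<subseteq> H}"
    show "relabel \<sigma> (relabel (inv \<sigma>) H) = H" by (rule relabel_inv_relabel[OF \<sigma>])
    have "F \<subseteq> relabel (inv \<sigma>) H"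
      using H relabel_mono[of "relabel \<sigma> F" H "inv \<sigma>"] by (simp add: relabel_inv_relabel[OF \<sigma>])
    then show "relabel (inv \<sigma>) H \<in> {H \<in> L_n n. F \<subseteq> H}"
      using H relabel_L_n[OF permutes_inv[OF \<sigma>]] by blast
  qed
  also have "\<dots> = moebius_Z M (relabel \<sigma> F)"
    by (rule moebius_Z_eq_sum_induced[OF relabel_edge_set_on[OF \<sigma> F], symmetric])
  finally show ?thesis ..
qed

lemma moebius_Z_fg_iso:
  assumes iso: "fg_iso A B" and A: "fst A \<subseteq> nodes_pos" and B: "fst B \<subseteq> nodes_pos"
  shows "moebius_Z M (snd A) = moebius_Z M (snd B)"
proof -
  from iso obtain f where valid: "fg_valid A" "fg_valid B" and f: "bij_betw f (fst A) (fst B)"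
    and edges: "snd B = (\<lambda>e. f ` e) ` snd A" unfolding fg_iso_def by blast
  have "finite (fst A \<union> fst B)" using valid unfolding fg_valid_def by simp
  then obtain n where "fst A \<union> fst B \<subseteq> {..n}" using finite_nat_iff_bounded_le by blast
  then have sub: "fst A \<subseteq> {1..n}" "fst B \<subseteq> {1..n}"
    using A B unfolding nodes_pos_def by auto
  obtain \<sigma> where \<sigma>: "\<sigma> permutes {1..n}" and agree: "\<And>x. x \<in> fst A \<Longrightarrow> \<sigma> x = f x"
    using bij_betw_extends_to_permutes[OF _ sub f] by blast
  have "snd B = relabel \<sigma> (snd A)"
    unfolding edges relabel_def
  proof (rule image_cong[OF refl])
    fix e assume "e \<in> snd A"
    then have "e \<subseteq> fst A" using valid(1) edge_sub unfolding fg_valid_def by blast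
    then show "f ` e = \<sigma> ` e" using agree by (auto simp: subset_iff)
  qed
  moreover have "snd A \<subseteq> edge_set_on {1..n}"
    using valid(1) edge_set_on_mono[OF sub(1)] unfolding fg_valid_def by blast
  ultimately show ?thesis using moebius_Z_relabel[OF \<sigma>] by simp
qed

text \<open>A representative may use the label 0, which is not a node of the random graph;
  shifting it by \<open>Suc\<close> moves it into \<open>nodes_pos\<close>.\<close>
definition phi :: "ugraph \<Rightarrow> real" where
  "phi U = moebius_Z M (snd (fg_image Suc (rep_ugraph U)))"

lemma phi_abs_ugraph:
  assumes "fg_iso X Y" "fst Y \<subseteq> nodes_pos"
  shows "phi (abs_ugraph X) = moebius_Z M (snd Y)"
proof -
  let ?R = "rep_ugraph (abs_ugraph X)"
  have "fg_valid X" using assms(1) unfolding fg_iso_def by simp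
  then have "fg_iso ?R Y" using fg_iso_rep_abs_ugraph assms(1) fg_iso_trans by blast
  moreover have "fg_iso ?R (fg_image Suc ?R)" by (rule fg_iso_fg_image[OF fg_valid_rep_ugraph]) simp
  ultimately have "fg_iso (fg_image Suc ?R) Y" using fg_iso_sym fg_iso_trans by blast
  moreover have "fst (fg_image Suc ?R) \<subseteq> nodes_pos" by (auto simp: fg_image_def nodes_pos_def)
  ultimately show ?thesis unfolding phi_def using moebius_Z_fg_iso assms(2) by blast
qed

lemma phi_ug_plus:
  fixes U V :: ugraph
  defines "X \<equiv> rep_ugraph U" and "Y \<equiv> rep_ugraph V"
  assumes "inj_on f (fst X)" "inj_on g (fst Y)" "f ` fst X \<inter> g ` fst Y = {}"
    and "f ` fst X \<subseteq> nodes_pos" "g ` fst Y \<subseteq> nodes_pos"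
  shows "phi (ug_plus U V)
    = measure M ({G \<in> space M. snd (fg_image f X) \<subseteq> G} \<inter> {G \<in> space M. snd (fg_image g Y) \<subseteq> G})"
proof -
  have "fg_iso (fg_disj_union X Y) (fg_union (fg_image f X) (fg_image g Y))"
    unfolding X_def Y_def using assms
    by (intro fg_iso_disj_union_embedding fg_valid_rep_ugraph) simp_all
  moreover have "fst (fg_union (fg_image f X) (fg_image g Y)) \<subseteq> nodes_pos"
    using assms by (simp add: fg_union_def fg_image_def)
  ultimately have "phi (ug_plus U V) = moebius_Z M (snd (fg_union (fg_image f X) (fg_image g Y)))"
    unfolding ug_plus_def X_def Y_def by (rule phi_abs_ugraph)
  moreover have "{G \<in> space M. snd (fg_union (fg_image f X) (fg_image g Y)) \<subseteq> G}
      = {G \<in> space M. snd (fg_image f X) \<subseteq> G} \<inter> {G \<in> space M. snd (fg_image g Y) \<subseteq> G}"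
    by (auto simp: fg_union_def)
  ultimately show ?thesis unfolding moebius_Z_def by simp
qed

definition copy_event :: "nat \<Rightarrow> nat \<Rightarrow> nat set \<times> nat set set \<Rightarrow> nat set set set" where
  "copy_event b m F = {G \<in> space M. snd (fg_image (block_shift b m) F) \<subseteq> G}"

lemma copy_event_sets: "fg_valid F \<Longrightarrow> copy_event b m F \<in> sets M"
  unfolding copy_event_def
  by (intro containment_event_sets fg_valid_fg_image inj_on_block_shift)
    (auto simp: fg_image_def block_shift_in_nodes_pos)

lemma measure_copy_event_Int:
  assumes "fst (rep_ugraph U) \<subseteq> {..<b}" "fst (rep_ugraph V) \<subseteq> {..<b}" "m \<noteq> m'"
  shows "measure M (copy_event b m (rep_ugraph U) \<inter> copy_event b m' (rep_ugraph V))
    = phi (ug_plus U V)"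
  unfolding copy_event_def using block_shift_disjoint[OF assms]
  by (intro phi_ug_plus[symmetric] inj_on_block_shift) (auto simp: block_shift_in_nodes_pos)

lemma positive_definite_phi: "positive_definite phi"
  unfolding positive_definite_def
proof (intro allI)
  fix n :: nat and c :: "nat \<Rightarrow> real" and s :: "nat \<Rightarrow> ugraph"
  define J where "J = {1..n}"
  have "finite (\<Union>j\<in>J. fst (rep_ugraph (s j)))"
    using fg_valid_rep_ugraph unfolding J_def fg_valid_def by auto
  then obtain b where b: "\<And>j. j \<in> J \<Longrightarrow> fst (rep_ugraph (s j)) \<subseteq> {..<b}"
    using finite_nat_bounded by (meson UN_subset_iff)
  define A where "A m j = copy_event b m (rep_ugraph (s j))" for m j
  define S where "S = (\<Sum>j\<in>J. \<Sum>k\<in>J. c j * c k * phi (ug_plus (s j) (s k)))"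
  define T where "T m m' = (\<Sum>j\<in>J. \<Sum>k\<in>J. c j * c k * measure M (A m j \<inter> A m' k))" for m m'
  have offdiag: "T m m' = S" if "m \<noteq> m'" for m m'
    unfolding T_def S_def A_def using measure_copy_event_Int[OF b b that]
    by (intro sum.cong) auto
  have diag: "T m m \<le> (\<Sum>j\<in>J. \<Sum>k\<in>J. \<bar>c j\<bar> * \<bar>c k\<bar>)" for m
  proof -
    have "c j * c k * measure M X \<le> \<bar>c j\<bar> * \<bar>c k\<bar>" for j k X
    proof -
      have "c j * c k * measure M X \<le> \<bar>c j * c k\<bar> * measure M X" by (intro mult_right_mono) auto
      also have "\<dots> \<le> \<bar>c j * c k\<bar>" by (intro mult_left_le) auto
      finally show ?thesis by (simp add: abs_mult)
    qed
    then show ?thesis unfolding T_def by (intro sum_mono)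
  qed
  have sections: "0 \<le> (\<Sum>m<N. \<Sum>m'<N. T m m')" for N
  proof -
    have "0 \<le> (\<Sum>p\<in>{..<N} \<times> J. \<Sum>q\<in>{..<N} \<times> J.
        c (snd p) * c (snd q) * measure M (A (fst p) (snd p) \<inter> A (fst q) (snd q)))"
      unfolding A_def J_def
      by (intro gram_sum_measure_Int_nonneg copy_event_sets fg_valid_rep_ugraph) auto
    also have "\<dots> = (\<Sum>m<N. \<Sum>m'<N. T m m')"
      unfolding T_def sum.cartesian_product' fst_conv snd_conv
      by (rule sum.cong[OF refl], rule sum.swap)
    finally show ?thesis .
  qed
  show "0 \<le> (\<Sum>j\<in>{1..n}. \<Sum>k\<in>{1..n}. c j * c k * phi (ug_plus (s j) (s k)))"
    using nonneg_if_offdiagonal_const[OF sections diag offdiag] unfolding S_def J_def .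
qed

end

theorem lemma1:
  fixes P :: "nat set set measure"
  assumes "prob_space P"
    and "sets P = sets graph_sigma"
    and "exchangeable P"
  shows "\<exists>\<phi> :: ugraph \<Rightarrow> real.
           (\<forall>F. fg_valid F \<and> fst F \<subseteq> nodes_pos \<longrightarrow> \<phi> (abs_ugraph F) = moebius_Z P (snd F))
         \<and> \<phi> \<in> Pb1"
proof -
  interpret exchangeable_random_graph P
    using assms by (simp add: exchangeable_random_graph_def exchangeable_random_graph_axioms_def
        random_graph_def random_graph_axioms_def)
  have phi_eq_Z: "\<forall>F. fg_valid F \<and> fst F \<subseteq> nodes_pos \<longrightarrow> phi (abs_ugraph F) = moebius_Z P (snd F)"
    using phi_abs_ugraph fg_iso_refl by blast
  have "\<bar>phi U\<bar> \<le> 1" for U unfolding phi_def moebius_Z_def by simp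
  moreover have "phi ug_empty = 1"
    using phi_eq_Z unfolding ug_empty_def by (simp add: fg_valid_def moebius_Z_def prob_space)
  ultimately have "phi \<in> Pb1"
    using positive_definite_phi unfolding Pb1_def by blast
  with phi_eq_Z show ?thesis by blast
qed

end
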